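(* Let $S=\{R_0,\dots,R_d\}$ be a quasi-thin scheme on $X$, $\mathbb F$ a field, $x\in X$, $E_a^*=E_a^*(x)$, and let $\mathcal T_0$ be the $\mathbb F$-linear span of $\{E_i^*A_jE_\ell^*:R_i,R_j,R_\ell\in S\}$. Then $\mathcal T_0$ is a unital $\mathbb F$-subalgebra of $M_X(\mathbb F)$ if and only if there do not exist $R_u,R_v,R_w,R_y,R_z\in S$ with $k_u=k_v=k_w=k_y=k_z=2$ and $p_{uv}^w=p_{wy}^z=|R_{u'}R_z|=1$.
   Context: Let $X$ be a nonempty finite set. A scheme of class $d$ on $X$ is a partition $S=\{R_0,\dots,R_d\}$ of $X\times X$ into nonempty sets such that $R_0=\{(b,b):b\in X\}$; for each $c$ there is $c'$ with $R_{c'}=\{(f,e):(e,f)\in R_c\}$; and for all $i,j,k$ the intersection number $p_{ij}^k=|\{\ell\in X:(m,\ell)\in R_i,(\ell,n)\in R_j\}|$ does not depend on $(m,n)\in R_k$. The valency is $k_a=p_{aa'}^0$; quasi-thin means all $k_a\le2$; complex product $R_aR_b=\{R_c:p_{ab}^c>0\}$. For $y\in X$, $yR_a=\{z:(y,z)\in R_a\}$. $A_a\in M_X(\mathbb F)$ is the $(0,1)$ adjacency matrix of $R_a$ and $E_a^*(y)$ is the diagonal $(0,1)$-matrix with ones exactly at positions indexed by $yR_a$. *)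

theory Defs
  imports Main
begin

definition is_scheme :: "'a set \<Rightarrow> nat \<Rightarrow> (nat \<Rightarrow> ('a \<times> 'a) set) \<Rightarrow> bool" where
  "is_scheme X d R \<longleftrightarrow>
     finite X \<and> X \<noteq> {} \<and>
     (\<forall>i\<le>d. R i \<noteq> {} \<and> R i \<subseteq> X \<times> X) \<and>
     (\<forall>i\<le>d. \<forall>j\<le>d. i \<noteq> j \<longrightarrow> R i \<inter> R j = {}) \<and>
     (\<Union>i\<in>{0..d}. R i) = X \<times> X \<and>
     R 0 = {(b, b) | b. b \<in> X} \<and>
     (\<forall>c\<le>d. \<exists>c'\<le>d. R c' = {(f, e). (e, f) \<in> R c}) \<and>
     (\<forall>i\<le>d. \<forall>j\<le>d. \<forall>k\<le>d. \<forall>m n m2 n2. (m, n) \<in> R k \<longrightarrow> (m2, n2) \<in> R k \<longrightarrow>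
        card {l \<in> X. (m, l) \<in> R i \<and> (l, n) \<in> R j} = card {l \<in> X. (m2, l) \<in> R i \<and> (l, n2) \<in> R j})"

text \<open>Intersection number p_{ij}^k (well defined for a scheme, evaluated at some pair of R k).\<close>
definition pnum :: "'a set \<Rightarrow> (nat \<Rightarrow> ('a \<times> 'a) set) \<Rightarrow> nat \<Rightarrow> nat \<Rightarrow> nat \<Rightarrow> nat" where
  "pnum X R i j k = (let (m, n) = (SOME mn. mn \<in> R k) in
      card {l \<in> X. (m, l) \<in> R i \<and> (l, n) \<in> R j})"

definition conv_idx :: "nat \<Rightarrow> (nat \<Rightarrow> ('a \<times> 'a) set) \<Rightarrow> nat \<Rightarrow> nat" where
  "conv_idx d R c = (SOME c'. c' \<le> d \<and> R c' = {(f, e). (e, f) \<in> R c})"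

definition valency :: "'a set \<Rightarrow> nat \<Rightarrow> (nat \<Rightarrow> ('a \<times> 'a) set) \<Rightarrow> nat \<Rightarrow> nat" where
  "valency X d R a = pnum X R a (conv_idx d R a) 0"

definition quasi_thin :: "'a set \<Rightarrow> nat \<Rightarrow> (nat \<Rightarrow> ('a \<times> 'a) set) \<Rightarrow> bool" where
  "quasi_thin X d R \<longleftrightarrow> (\<forall>a\<le>d. valency X d R a \<le> 2)"

definition cplx_prod :: "'a set \<Rightarrow> nat \<Rightarrow> (nat \<Rightarrow> ('a \<times> 'a) set) \<Rightarrow> nat \<Rightarrow> nat \<Rightarrow> ('a \<times> 'a) set set" where
  "cplx_prod X d R a b = {R c | c. c \<le> d \<and> pnum X R a b c > 0}"

text \<open>Matrices in M_X(F) are represented as functions 'a => 'a => 'f vanishing outside X x X.\<close>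
definition matrices :: "'a set \<Rightarrow> ('a \<Rightarrow> 'a \<Rightarrow> 'f::field) set" where
  "matrices X = {M. \<forall>y z. (y \<notin> X \<or> z \<notin> X) \<longrightarrow> M y z = 0}"

definition mat_mult :: "'a set \<Rightarrow> ('a \<Rightarrow> 'a \<Rightarrow> 'f::field) \<Rightarrow> ('a \<Rightarrow> 'a \<Rightarrow> 'f) \<Rightarrow> ('a \<Rightarrow> 'a \<Rightarrow> 'f)" where
  "mat_mult X A B = (\<lambda>y z. \<Sum>w\<in>X. A y w * B w z)"

definition mat_one :: "'a set \<Rightarrow> ('a \<Rightarrow> 'a \<Rightarrow> 'f::field)" where
  "mat_one X = (\<lambda>y z. if y = z \<and> y \<in> X then 1 else 0)"

definition adj_mat :: "(nat \<Rightarrow> ('a \<times> 'a) set) \<Rightarrow> nat \<Rightarrow> ('a \<Rightarrow> 'a \<Rightarrow> 'f::field)" where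
  "adj_mat R a = (\<lambda>y z. if (y, z) \<in> R a then 1 else 0)"

definition dual_idem :: "(nat \<Rightarrow> ('a \<times> 'a) set) \<Rightarrow> 'a \<Rightarrow> nat \<Rightarrow> ('a \<Rightarrow> 'a \<Rightarrow> 'f::field)" where
  "dual_idem R x a = (\<lambda>y z. if y = z \<and> (x, y) \<in> R a then 1 else 0)"

definition T0 :: "'a set \<Rightarrow> nat \<Rightarrow> (nat \<Rightarrow> ('a \<times> 'a) set) \<Rightarrow> 'a \<Rightarrow> ('a \<Rightarrow> 'a \<Rightarrow> 'f::field) set" where
  "T0 X d R x = {M. \<exists>c :: nat \<Rightarrow> nat \<Rightarrow> nat \<Rightarrow> 'f.
      M = (\<lambda>y z. \<Sum>i\<in>{0..d}. \<Sum>j\<in>{0..d}. \<Sum>l\<in>{0..d}.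
             c i j l * mat_mult X (mat_mult X (dual_idem R x i) (adj_mat R j)) (dual_idem R x l) y z)}"

definition unital_subalgebra :: "'a set \<Rightarrow> ('a \<Rightarrow> 'a \<Rightarrow> 'f::field) set \<Rightarrow> bool" where
  "unital_subalgebra X T \<longleftrightarrow>
     T \<subseteq> matrices X \<and>
     (\<lambda>y z. 0) \<in> T \<and>
     (\<forall>A\<in>T. \<forall>B\<in>T. (\<lambda>y z. A y z + B y z) \<in> T) \<and>
     (\<forall>c. \<forall>A\<in>T. (\<lambda>y z. c * A y z) \<in> T) \<and>
     (\<forall>A\<in>T. \<forall>B\<in>T. mat_mult X A B \<in> T) \<and>
     mat_one X \<in> T"

end

theory Submission
  imports Defs
begin

text \<open>
  T0 consists of the matrices on X whose entry at (a, b) depends only on the cell of (a, b), i.e. on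
  the relations containing (x, a), (a, b) and (x, b); this space always contains the identity.
  The product of the indicator matrices of the cells (i, j, l) and (l, m, n) has at (a, b) the
  number of triangles c \<in> xR_l with (a, c) \<in> R_j and (c, b) \<in> R_m, so T0 is closed under
  multiplication iff these triangle counts are constant on cells.
  In a quasi-thin scheme xR_l has at most two points, so the triangle counts of two pairs of one
  cell can only differ as 1 against 0, and then double counting forces the valencies 2,
  p_{ij}^l = p_{lm}^n = 1 and |R_{i'}R_n| = 1: a forbidden configuration.  Conversely, a forbidden
  configuration yields two pairs (s, b), (s', b) of one cell with triangle counts 1 and 0, which
  differ in every field.
\<close>

definition mult_closed :: "'a set \<Rightarrow> ('a \<Rightarrow> 'a \<Rightarrow> 'f::field) set \<Rightarrow> bool" where
  "mult_closed X T \<longleftrightarrow> (\<forall>A \<in> T. \<forall>B \<in> T. mat_mult X A B \<in> T)"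

lemma sum_comp_eq_sum_card_fibres:
  fixes F :: "'b \<Rightarrow> 'f::semiring_1"
  assumes "finite S" "finite T" "g ` S \<subseteq> T"
  shows "(\<Sum>c\<in>S. F (g c)) = (\<Sum>t\<in>T. of_nat (card {c \<in> S. g c = t}) * F t)"
proof -
  have "(\<Sum>c\<in>S. F (g c)) = (\<Sum>t\<in>T. \<Sum>c\<in>{c \<in> S. g c = t}. F (g c))"
    by (rule sum.group[OF assms, symmetric])
  also have "\<dots> = (\<Sum>t\<in>T. of_nat (card {c \<in> S. g c = t}) * F t)"
    by (intro sum.cong refl) simp
  finally show ?thesis .
qed

lemma two_le_card:
  assumes "finite A" "q \<in> A" "q' \<in> A" "q \<noteq> q'"
  shows "2 \<le> card A"
  using card_mono[OF assms(1), of "{q, q'}"] assms(2-4) by simp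

lemma card_2_obtain_other:
  assumes "card A = 2" "a \<in> A"
  obtains b where "b \<in> A" "b \<noteq> a"
proof -
  obtain p q where "A = {p, q}" "p \<noteq> q"
    using assms(1) unfolding card_2_iff by blast
  with assms(2) that show ?thesis by blast
qed

lemma card_Int_less_imp_singletons:
  assumes "finite L" "card L \<le> 2" "A \<subseteq> L" "D \<subseteq> L" "A' \<subseteq> L" "D' \<subseteq> L"
    and "card A = card A'" "card D = card D'" "card (A \<inter> D) < card (A' \<inter> D')"
  obtains c e c' where "card L = 2" "A = {c}" "D = {e}" "c \<noteq> e" "A' = {c'}" "D' = {c'}"
proof -
  have fin: "finite A" "finite D" "finite A'" "finite D'"
    using assms(1,3-6) finite_subset by blast+
  have "A' \<inter> D' \<noteq> {}" using assms(9) by force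
  then have "card A' \<noteq> 0" "card D' \<noteq> 0" using fin by auto
  have "A \<noteq> L"
  proof
    assume "A = L"
    then have "A' = L" using assms(1,5,7) card_subset_eq by metis
    then show False using \<open>A = L\<close> assms(4,6,8,9) by (simp add: Int_absorb1)
  qed
  moreover have "D \<noteq> L"
  proof
    assume "D = L"
    then have "D' = L" using assms(1,6,8) card_subset_eq by metis
    then show False using \<open>D = L\<close> assms(3,5,7,9) by (simp add: Int_absorb2)
  qed
  ultimately have "card A < card L" "card D < card L"
    using assms(1,3,4) by (simp_all add: psubset_card_mono)
  then have "card L = 2" "card A = 1" "card D = 1" "card A' = 1" "card D' = 1"
    using assms(2,7,8) \<open>card A' \<noteq> 0\<close> \<open>card D' \<noteq> 0\<close> by linarith+
  then obtain c e c' e' where "A = {c}" "D = {e}" "A' = {c'}" "D' = {e'}"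
    by (meson card_1_singletonE)
  with assms(9) that \<open>card L = 2\<close> show ?thesis by (cases "c = e"; cases "c' = e'") auto
qed

locale scheme =
  fixes X :: "'a set" and d :: nat and R :: "nat \<Rightarrow> ('a \<times> 'a) set"
  assumes scheme: "is_scheme X d R"
begin

lemma finite_X: "finite X"
  using scheme unfolding is_scheme_def by (elim conjE)

lemma R_nonempty: "k \<le> d \<Longrightarrow> R k \<noteq> {}"
  using scheme unfolding is_scheme_def by meson

lemma R_subset: "k \<le> d \<Longrightarrow> (p, q) \<in> R k \<Longrightarrow> p \<in> X \<and> q \<in> X"
  using scheme unfolding is_scheme_def by (meson mem_Sigma_iff subsetD)

lemma R_disjoint:
  assumes "k \<le> d" "k' \<le> d" "(p, q) \<in> R k" "(p, q) \<in> R k'"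
  shows "k = k'"
proof -
  have "\<forall>i\<le>d. \<forall>j\<le>d. i \<noteq> j \<longrightarrow> R i \<inter> R j = {}"
    using scheme unfolding is_scheme_def by meson
  then show ?thesis using assms by blast
qed

lemma R_cover:
  assumes "p \<in> X" "q \<in> X"
  shows "\<exists>k\<le>d. (p, q) \<in> R k"
proof -
  have "(\<Union>k\<in>{0..d}. R k) = X \<times> X"
    using scheme unfolding is_scheme_def by meson
  then have "(p, q) \<in> (\<Union>k\<in>{0..d}. R k)" using assms by simp
  then show ?thesis by auto
qed

lemma R_0_iff: "(p, q) \<in> R 0 \<longleftrightarrow> p = q \<and> p \<in> X"
proof -
  have "R 0 = {(b, b) | b. b \<in> X}"
    using scheme unfolding is_scheme_def by meson
  then show ?thesis by auto
qed

lemma conv_idx: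
  assumes "k \<le> d"
  shows "conv_idx d R k \<le> d" and "(p, q) \<in> R (conv_idx d R k) \<longleftrightarrow> (q, p) \<in> R k"
proof -
  have "\<forall>c\<le>d. \<exists>c'\<le>d. R c' = {(f, e). (e, f) \<in> R c}"
    using scheme unfolding is_scheme_def by meson
  then have "\<exists>k'. k' \<le> d \<and> R k' = {(f, e). (e, f) \<in> R k}"
    using assms by blast
  then have "conv_idx d R k \<le> d \<and> R (conv_idx d R k) = {(f, e). (e, f) \<in> R k}"
    unfolding conv_idx_def by (rule someI_ex)
  then show "conv_idx d R k \<le> d" and "(p, q) \<in> R (conv_idx d R k) \<longleftrightarrow> (q, p) \<in> R k"
    by auto
qed

lemma card_paths_eq:
  assumes "i \<le> d" "j \<le> d" "k \<le> d" "(p, q) \<in> R k" "(p', q') \<in> R k"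
  shows "card {c \<in> X. (p, c) \<in> R i \<and> (c, q) \<in> R j} = card {c \<in> X. (p', c) \<in> R i \<and> (c, q') \<in> R j}"
proof -
  have "\<forall>i\<le>d. \<forall>j\<le>d. \<forall>k\<le>d. \<forall>m n m2 n2. (m, n) \<in> R k \<longrightarrow> (m2, n2) \<in> R k \<longrightarrow>
      card {l \<in> X. (m, l) \<in> R i \<and> (l, n) \<in> R j} = card {l \<in> X. (m2, l) \<in> R i \<and> (l, n2) \<in> R j}"
    using scheme unfolding is_scheme_def by meson
  then show ?thesis using assms by blast
qed

lemma card_common_succ_eq:
  assumes "i \<le> d" "j \<le> d" "k \<le> d" "(p, q) \<in> R k" "(p', q') \<in> R k"
  shows "card {c \<in> X. (p, c) \<in> R i \<and> (q, c) \<in> R j} = card {c \<in> X. (p', c) \<in> R i \<and> (q', c) \<in> R j}"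
  using card_paths_eq[OF assms(1) conv_idx(1)[OF assms(2)] assms(3-5)]
  by (simp add: conv_idx(2)[OF assms(2)])

lemma pnum_eq:
  assumes "i \<le> d" "j \<le> d" "k \<le> d" "(p, q) \<in> R k"
  shows "pnum X R i j k = card {c \<in> X. (p, c) \<in> R i \<and> (c, q) \<in> R j}"
proof -
  obtain m n where mn: "(SOME mn. mn \<in> R k) = (m, n)" by (cases "SOME mn. mn \<in> R k")
  have "(m, n) \<in> R k" using someI[of "\<lambda>mn. mn \<in> R k", OF assms(4)] mn by simp
  then show ?thesis unfolding pnum_def mn using card_paths_eq[OF assms(1-3) _ assms(4)] by simp
qed

lemma valency_eq_card_succ:
  assumes "a \<le> d" "p \<in> X"
  shows "valency X d R a = card {c \<in> X. (p, c) \<in> R a}"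
proof -
  have "(p, p) \<in> R 0" using assms(2) by (simp add: R_0_iff)
  then show ?thesis unfolding valency_def
    using pnum_eq[OF assms(1) conv_idx(1)[OF assms(1)], of 0 p p]
    by (simp add: conv_idx(2)[OF assms(1)])
qed

lemma sum_card_succ_eq:
  assumes "a \<le> d"
  shows "(\<Sum>p\<in>X. card {c \<in> X. (p, c) \<in> R a}) = card X * valency X d R a"
proof -
  have "(\<Sum>p\<in>X. card {c \<in> X. (p, c) \<in> R a}) = (\<Sum>p\<in>X. valency X d R a)"
    by (rule sum.cong) (simp_all add: valency_eq_card_succ[OF assms])
  then show ?thesis by simp
qed

lemma valency_eq_card_pred:
  assumes "a \<le> d" "p \<in> X"
  shows "valency X d R a = card {c \<in> X. (c, p) \<in> R a}"
proof -
  let ?a' = "conv_idx d R a"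
  have a': "?a' \<le> d" "\<And>p q. (p, q) \<in> R ?a' \<longleftrightarrow> (q, p) \<in> R a"
    using conv_idx[OF assms(1)] by auto
  have "card X * valency X d R a = (\<Sum>c\<in>X. card {q \<in> X. (c, q) \<in> R ?a'})"
    using sum_multicount_gen[OF finite_X finite_X, of "\<lambda>c q. (q, c) \<in> R ?a'"]
    by (simp add: a'(2) sum_card_succ_eq[OF assms(1), symmetric])
  also have "\<dots> = card X * valency X d R ?a'"
    by (rule sum_card_succ_eq[OF a'(1)])
  finally have "valency X d R a = valency X d R ?a'"
    using finite_X assms(2) by (cases "card X = 0") auto
  then show ?thesis
    using valency_eq_card_succ[OF a'(1) assms(2)] by (simp add: a'(2))
qed

definition rel_idx :: "'a \<Rightarrow> 'a \<Rightarrow> nat" where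
  "rel_idx p q = (THE k. k \<le> d \<and> (p, q) \<in> R k)"

lemma rel_idx_eq: "k \<le> d \<Longrightarrow> (p, q) \<in> R k \<Longrightarrow> rel_idx p q = k"
  unfolding rel_idx_def using R_disjoint by blast

lemma rel_idx: "p \<in> X \<Longrightarrow> q \<in> X \<Longrightarrow> rel_idx p q \<le> d \<and> (p, q) \<in> R (rel_idx p q)"
  using R_cover rel_idx_eq by metis

lemma in_R_iff_rel_idx:
  assumes "k \<le> d" "p \<in> X" "q \<in> X"
  shows "(p, q) \<in> R k \<longleftrightarrow> rel_idx p q = k"
  using rel_idx[OF assms(2,3)] rel_idx_eq[OF assms(1)] by auto

lemma R_inject:
  assumes "k \<le> d" "k' \<le> d" "R k = R k'"
  shows "k = k'"
proof -
  obtain p q where "(p, q) \<in> R k" using R_nonempty[OF assms(1)] by auto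
  then show ?thesis using R_disjoint[OF assms(1,2)] assms(3) by simp
qed

definition forbidden_configuration :: bool where
  "forbidden_configuration \<longleftrightarrow>
    (\<exists>u\<le>d. \<exists>v\<le>d. \<exists>w\<le>d. \<exists>y\<le>d. \<exists>z\<le>d.
      valency X d R u = 2 \<and> valency X d R v = 2 \<and> valency X d R w = 2 \<and>
      valency X d R y = 2 \<and> valency X d R z = 2 \<and>
      pnum X R u v w = 1 \<and> pnum X R w y z = 1 \<and>
      card (cplx_prod X d R (conv_idx d R u) z) = 1)"

end

locale quasi_thin_scheme = scheme +
  assumes quasi_thin: "quasi_thin X d R"
begin

lemma valency_le_2: "a \<le> d \<Longrightarrow> valency X d R a \<le> 2"
  using quasi_thin unfolding quasi_thin_def by blast

lemma valency_eq_2_if_two_succs: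
  assumes "a \<le> d" "(p, q) \<in> R a" "(p, q') \<in> R a" "q \<noteq> q'"
  shows "valency X d R a = 2"
proof -
  have "p \<in> X" "q \<in> X" "q' \<in> X" using R_subset assms(1-3) by blast+
  then have "2 \<le> card {c \<in> X. (p, c) \<in> R a}"
    using two_le_card[of _ q q'] finite_X assms(2-4) by simp
  then show ?thesis
    using valency_eq_card_succ[OF assms(1) \<open>p \<in> X\<close>] valency_le_2[OF assms(1)] by simp
qed

lemma valency_eq_2_if_two_preds:
  assumes "a \<le> d" "(q, p) \<in> R a" "(q', p) \<in> R a" "q \<noteq> q'"
  shows "valency X d R a = 2"
proof -
  have "p \<in> X" "q \<in> X" "q' \<in> X" using R_subset assms(1-3) by blast+
  then have "2 \<le> card {c \<in> X. (c, p) \<in> R a}"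
    using two_le_card[of _ q q'] finite_X assms(2-4) by simp
  then show ?thesis
    using valency_eq_card_pred[OF assms(1) \<open>p \<in> X\<close>] valency_le_2[OF assms(1)] by simp
qed

end

locale pointed_scheme = scheme +
  fixes x :: 'a
  assumes x_in_X: "x \<in> X"
begin

definition xR :: "nat \<Rightarrow> 'a set" where
  "xR i = {c \<in> X. (x, c) \<in> R i}"

lemma finite_xR: "finite (xR i)"
  unfolding xR_def using finite_X by simp

lemma xR_subset: "xR i \<subseteq> X"
  unfolding xR_def by blast

lemma Collect_xR: "{c \<in> xR i. P c} = {c \<in> X. (x, c) \<in> R i \<and> P c}"
  unfolding xR_def by auto

lemma pnum_eq_card_xR:
  assumes "i \<le> d" "j \<le> d" "l \<le> d" "z \<in> xR l"
  shows "pnum X R i j l = card {s \<in> xR i. (s, z) \<in> R j}"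
  using pnum_eq[OF assms(1-3)] assms(4) unfolding Collect_xR xR_def by simp

lemma card_xR: "i \<le> d \<Longrightarrow> card (xR i) = valency X d R i"
  unfolding xR_def using valency_eq_card_succ x_in_X by simp

lemma xR_nonempty:
  assumes "i \<le> d"
  shows "xR i \<noteq> {}"
proof -
  obtain p q where pq: "(p, q) \<in> R i" using R_nonempty[OF assms] by auto
  then have "0 < card {c \<in> X. (p, c) \<in> R i}"
    using R_subset[OF assms pq] finite_X by (auto simp: card_gt_0_iff)
  then show ?thesis
    using card_xR[OF assms] valency_eq_card_succ[OF assms, of p] R_subset[OF assms pq] by auto
qed

lemma cplx_prod_conv_idx:
  assumes "i \<le> d" "n \<le> d"
  shows "cplx_prod X d R (conv_idx d R i) n = (\<lambda>(s, t). R (rel_idx s t)) ` (xR i \<times> xR n)"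
proof (intro equalityI subsetI)
  let ?i' = "conv_idx d R i"
  have i': "?i' \<le> d" "\<And>p q. (p, q) \<in> R ?i' \<longleftrightarrow> (q, p) \<in> R i"
    using conv_idx[OF assms(1)] by auto
  fix S assume "S \<in> cplx_prod X d R ?i' n"
  then obtain c where c: "S = R c" "c \<le> d" "0 < pnum X R ?i' n c"
    unfolding cplx_prod_def by blast
  obtain p q where pq: "(p, q) \<in> R c" using R_nonempty[OF c(2)] by auto
  have "0 < card {r \<in> X. (p, r) \<in> R ?i' \<and> (r, q) \<in> R n}"
    using c(3) pnum_eq[OF i'(1) assms(2) c(2) pq] by simp
  then obtain r where "(r, p) \<in> R i" "(r, q) \<in> R n"
    unfolding card_gt_0_iff i'(2) by blast
  obtain s where s: "s \<in> xR i" using xR_nonempty[OF assms(1)] by auto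
  have "0 < card {t \<in> X. (r, t) \<in> R n \<and> (p, t) \<in> R c}"
    using pq \<open>(r, q) \<in> R n\<close> R_subset[OF c(2) pq] finite_X by (auto simp: card_gt_0_iff)
  then have "0 < card {t \<in> xR n. (s, t) \<in> R c}"
    using card_common_succ_eq[OF assms(2) c(2) assms(1) \<open>(r, p) \<in> R i\<close>, of x s] s
    unfolding Collect_xR xR_def by simp
  then obtain t where "t \<in> xR n" "(s, t) \<in> R c"
    unfolding card_gt_0_iff by blast
  moreover have "S = (\<lambda>(s, t). R (rel_idx s t)) (s, t)"
    using c(1) rel_idx_eq[OF c(2) \<open>(s, t) \<in> R c\<close>] by simp
  ultimately show "S \<in> (\<lambda>(s, t). R (rel_idx s t)) ` (xR i \<times> xR n)"
    using s by blast
next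
  fix S assume "S \<in> (\<lambda>(s, t). R (rel_idx s t)) ` (xR i \<times> xR n)"
  then obtain s t where st: "s \<in> xR i" "t \<in> xR n" "S = R (rel_idx s t)" by blast
  let ?c = "rel_idx s t"
  have c: "?c \<le> d" "(s, t) \<in> R ?c" using rel_idx st(1,2) unfolding xR_def by auto
  have "x \<in> {r \<in> X. (s, r) \<in> R (conv_idx d R i) \<and> (r, t) \<in> R n}"
    using st x_in_X conv_idx(2)[OF assms(1)] unfolding xR_def by simp
  then have "pnum X R (conv_idx d R i) n ?c > 0"
    using pnum_eq[OF conv_idx(1)[OF assms(1)] assms(2) c] finite_X by (auto simp: card_gt_0_iff)
  then show "S \<in> cplx_prod X d R (conv_idx d R i) n"
    unfolding cplx_prod_def using st(3) c(1) by blast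
qed

definition cell :: "'a \<Rightarrow> 'a \<Rightarrow> nat \<times> nat \<times> nat" where
  "cell a b = (rel_idx x a, rel_idx a b, rel_idx x b)"

lemma cell_memberships:
  assumes "a \<in> X" "b \<in> X" "cell a b = (i, k, n)"
  shows "i \<le> d" "k \<le> d" "n \<le> d" "a \<in> xR i" "(a, b) \<in> R k" "b \<in> xR n"
  using assms rel_idx[of x a] rel_idx[of a b] rel_idx[of x b] x_in_X
  unfolding cell_def xR_def by auto

definition triangles :: "'a \<Rightarrow> 'a \<Rightarrow> nat \<Rightarrow> nat \<Rightarrow> nat \<Rightarrow> 'a set" where
  "triangles a b l j m = {c \<in> xR l. (a, c) \<in> R j \<and> (c, b) \<in> R m}"

definition cell_constant :: "('a \<Rightarrow> 'a \<Rightarrow> 'f::field) set" where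
  "cell_constant = {M \<in> matrices X. \<exists>f. \<forall>a\<in>X. \<forall>b\<in>X. M a b = f (cell a b)}"

lemma generator_entry:
  assumes "i \<le> d" "j \<le> d" "l \<le> d"
  shows "mat_mult X (mat_mult X (dual_idem R x i) (adj_mat R j)) (dual_idem R x l) a b
       = (if a \<in> X \<and> b \<in> X \<and> cell a b = (i, j, l) then 1 else (0::'f::field))"
proof -
  have inner: "mat_mult X (dual_idem R x i) (adj_mat R j) a c
      = (if a \<in> X \<and> (x, a) \<in> R i \<and> (a, c) \<in> R j then 1 else (0::'f))" for c
  proof -
    have "mat_mult X (dual_idem R x i) (adj_mat R j) a c
        = (\<Sum>w\<in>X. if a = w then if (x, a) \<in> R i \<and> (a, c) \<in> R j then 1 else 0 else (0::'f))"
      unfolding mat_mult_def dual_idem_def adj_mat_def by (intro sum.cong) auto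
    then show ?thesis using finite_X by simp
  qed
  have "mat_mult X (mat_mult X (dual_idem R x i) (adj_mat R j)) (dual_idem R x l) a b
      = (\<Sum>w\<in>X. if w = b then if a \<in> X \<and> (x, a) \<in> R i \<and> (a, b) \<in> R j \<and> (x, b) \<in> R l
                             then 1 else 0 else (0::'f))"
    unfolding mat_mult_def[of X _ "dual_idem R x l"] inner unfolding dual_idem_def
    by (intro sum.cong) auto
  also have "\<dots> = (if a \<in> X \<and> b \<in> X \<and> (x, a) \<in> R i \<and> (a, b) \<in> R j \<and> (x, b) \<in> R l then 1 else 0)"
    using finite_X by auto
  also have "\<dots> = (if a \<in> X \<and> b \<in> X \<and> cell a b = (i, j, l) then 1 else 0)"
    unfolding cell_def using assms x_in_X by (auto simp: in_R_iff_rel_idx)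
  finally show ?thesis .
qed

lemma cell_bounded: "a \<in> X \<Longrightarrow> b \<in> X \<Longrightarrow> cell a b \<in> {0..d} \<times> {0..d} \<times> {0..d}"
  unfolding cell_def using rel_idx x_in_X by simp

lemma T0_entry:
  fixes c :: "nat \<Rightarrow> nat \<Rightarrow> nat \<Rightarrow> 'f::field"
  shows "(\<Sum>i\<in>{0..d}. \<Sum>j\<in>{0..d}. \<Sum>l\<in>{0..d}.
           c i j l * mat_mult X (mat_mult X (dual_idem R x i) (adj_mat R j)) (dual_idem R x l) a b)
       = (if a \<in> X \<and> b \<in> X then case_prod (case_prod \<circ> c) (cell a b) else 0)"
  (is "?lhs = (if _ then ?c (cell a b) else 0)")
proof -
  have "?lhs = (\<Sum>t\<in>{0..d} \<times> {0..d} \<times> {0..d}.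
                  if cell a b = t then if a \<in> X \<and> b \<in> X then ?c t else 0 else 0)"
    unfolding sum.cartesian_product by (intro sum.cong refl) (clarsimp simp: generator_entry)
  then show ?thesis using cell_bounded by simp
qed

lemma T0_eq_cell_constant: "T0 X d R x = (cell_constant :: ('a \<Rightarrow> 'a \<Rightarrow> 'f::field) set)"
proof (intro equalityI subsetI)
  fix M :: "'a \<Rightarrow> 'a \<Rightarrow> 'f" assume "M \<in> T0 X d R x"
  then obtain c :: "nat \<Rightarrow> nat \<Rightarrow> nat \<Rightarrow> 'f" where "M = (\<lambda>a b. \<Sum>i\<in>{0..d}. \<Sum>j\<in>{0..d}. \<Sum>l\<in>{0..d}.
      c i j l * mat_mult X (mat_mult X (dual_idem R x i) (adj_mat R j)) (dual_idem R x l) a b)"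
    unfolding T0_def by blast
  then have "M = (\<lambda>a b. if a \<in> X \<and> b \<in> X then case_prod (case_prod \<circ> c) (cell a b) else 0)"
    by (simp only: T0_entry)
  then show "M \<in> cell_constant" unfolding cell_constant_def matrices_def by auto
next
  fix M :: "'a \<Rightarrow> 'a \<Rightarrow> 'f" assume "M \<in> cell_constant"
  then obtain f where mat: "M \<in> matrices X" and f: "\<forall>a\<in>X. \<forall>b\<in>X. M a b = f (cell a b)"
    unfolding cell_constant_def by blast
  have "M a b = (if a \<in> X \<and> b \<in> X
      then case_prod (case_prod \<circ> (\<lambda>i j l. f (i, j, l))) (cell a b) else 0)" for a b
    using mat f unfolding matrices_def by (cases "cell a b") auto
  then have "M = (\<lambda>a b. \<Sum>i\<in>{0..d}. \<Sum>j\<in>{0..d}. \<Sum>l\<in>{0..d}.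
      f (i, j, l) * mat_mult X (mat_mult X (dual_idem R x i) (adj_mat R j)) (dual_idem R x l) a b)"
    unfolding T0_entry by blast
  then show "M \<in> T0 X d R x"
    unfolding T0_def mem_Collect_eq by (rule exI[of _ "\<lambda>i j l. f (i, j, l)"])
qed

lemma cell_constantI:
  assumes "M \<in> matrices X"
    and "\<And>a b a' b'. a \<in> X \<Longrightarrow> b \<in> X \<Longrightarrow> a' \<in> X \<Longrightarrow> b' \<in> X \<Longrightarrow> cell a b = cell a' b' \<Longrightarrow>
           M a b = M a' b'"
  shows "M \<in> cell_constant"
proof -
  define rep where "rep t = (SOME p. p \<in> X \<times> X \<and> case_prod cell p = t)" for t
  have "M a b = case_prod M (rep (cell a b))" if "a \<in> X" "b \<in> X" for a b
  proof -
    have "rep (cell a b) \<in> X \<times> X \<and> case_prod cell (rep (cell a b)) = cell a b"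
      unfolding rep_def by (rule someI[of _ "(a, b)"]) (simp add: that)
    moreover obtain a' b' where rep: "rep (cell a b) = (a', b')"
      by (cases "rep (cell a b)")
    ultimately show ?thesis using assms(2)[OF that, of a' b'] by simp
  qed
  then show ?thesis
    unfolding cell_constant_def using assms(1)
    by (intro CollectI conjI exI[of _ "\<lambda>t. case_prod M (rep t)"]) auto
qed

lemma cell_constantD:
  assumes "M \<in> cell_constant" "a \<in> X" "b \<in> X" "a' \<in> X" "b' \<in> X" "cell a b = cell a' b'"
  shows "M a b = M a' b'"
  using assms unfolding cell_constant_def by auto

lemma mat_one_cell_constant: "mat_one X \<in> cell_constant"
proof (rule cell_constantI)
  show "mat_one X \<in> matrices X" unfolding matrices_def mat_one_def by auto
next
  have "a = b \<longleftrightarrow> rel_idx a b = 0" if "a \<in> X" "b \<in> X" for a b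
    using in_R_iff_rel_idx[of 0 a b] that by (simp add: R_0_iff)
  then show "mat_one X a b = mat_one X a' b'"
    if "a \<in> X" "b \<in> X" "a' \<in> X" "b' \<in> X" "cell a b = cell a' b'" for a b a' b'
    using that unfolding mat_one_def cell_def by (metis prod.inject)
qed

lemma unital_subalgebra_cell_constant_iff:
  "unital_subalgebra X (cell_constant :: ('a \<Rightarrow> 'a \<Rightarrow> 'f::field) set) \<longleftrightarrow>
    mult_closed X (cell_constant :: ('a \<Rightarrow> 'a \<Rightarrow> 'f) set)"
proof -
  have zero: "(\<lambda>a b. 0) \<in> (cell_constant :: ('a \<Rightarrow> 'a \<Rightarrow> 'f) set)"
    by (rule cell_constantI) (simp_all add: matrices_def)
  have add: "(\<lambda>a b. A a b + B a b) \<in> cell_constant"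
    if "A \<in> cell_constant" "B \<in> cell_constant" for A B :: "'a \<Rightarrow> 'a \<Rightarrow> 'f"
  proof (rule cell_constantI)
    show "(\<lambda>a b. A a b + B a b) \<in> matrices X"
      using that unfolding cell_constant_def matrices_def by simp
  next
    fix a b a' b' assume "a \<in> X" "b \<in> X" "a' \<in> X" "b' \<in> X" "cell a b = cell a' b'"
    then show "A a b + B a b = A a' b' + B a' b'"
      using cell_constantD[OF that(1)] cell_constantD[OF that(2)] by metis
  qed
  have scale: "(\<lambda>a b. r * A a b) \<in> cell_constant"
    if "A \<in> cell_constant" for r and A :: "'a \<Rightarrow> 'a \<Rightarrow> 'f"
  proof (rule cell_constantI)
    show "(\<lambda>a b. r * A a b) \<in> matrices X"
      using that unfolding cell_constant_def matrices_def by simp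
  next
    fix a b a' b' assume "a \<in> X" "b \<in> X" "a' \<in> X" "b' \<in> X" "cell a b = cell a' b'"
    then show "r * A a b = r * A a' b'"
      using cell_constantD[OF that] by metis
  qed
  have "cell_constant \<subseteq> matrices X"
    unfolding cell_constant_def by blast
  with zero add scale mat_one_cell_constant show ?thesis
    unfolding unital_subalgebra_def mult_closed_def by blast
qed

lemma triangles_eq_fibre:
  assumes "a \<in> X" "b \<in> X" "l \<le> d" "j \<le> d" "m \<le> d"
  shows "{c \<in> X. (rel_idx x c, rel_idx a c, rel_idx c b) = (l, j, m)} = triangles a b l j m"
  unfolding triangles_def xR_def using assms x_in_X by (auto simp: in_R_iff_rel_idx)

lemma mat_mult_cell_constant:
  assumes triangles: "\<And>a b a' b' l j m. a \<in> X \<Longrightarrow> b \<in> X \<Longrightarrow> a' \<in> X \<Longrightarrow> b' \<in> X \<Longrightarrow>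
      cell a b = cell a' b' \<Longrightarrow> l \<le> d \<Longrightarrow> j \<le> d \<Longrightarrow> m \<le> d \<Longrightarrow>
      card (triangles a b l j m) = card (triangles a' b' l j m)"
    and A: "A \<in> cell_constant" and B: "B \<in> cell_constant"
  shows "mat_mult X A B \<in> cell_constant"
proof (rule cell_constantI)
  show "mat_mult X A B \<in> matrices X"
    using A B unfolding cell_constant_def matrices_def mat_mult_def by auto
next
  obtain fA fB where fA: "\<forall>a\<in>X. \<forall>b\<in>X. A a b = fA (cell a b)"
    and fB: "\<forall>a\<in>X. \<forall>b\<in>X. B a b = fB (cell a b)"
    using A B unfolding cell_constant_def by blast
  let ?T = "{0..d} \<times> {0..d} \<times> {0..d}"
  define key where "key a b c = (rel_idx x c, rel_idx a c, rel_idx c b)" for a b c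
  define F where "F i n t = (case t of (l, j, m) \<Rightarrow> fA (i, j, l) * fB (l, m, n))" for i n t
  have entry: "mat_mult X A B a b
      = (\<Sum>t\<in>?T. of_nat (card {c \<in> X. key a b c = t}) * F (rel_idx x a) (rel_idx x b) t)"
    if "a \<in> X" "b \<in> X" for a b
  proof -
    have "mat_mult X A B a b = (\<Sum>c\<in>X. F (rel_idx x a) (rel_idx x b) (key a b c))"
      unfolding mat_mult_def F_def key_def using fA fB that by (intro sum.cong refl) (simp add: cell_def)
    also have "\<dots> = (\<Sum>t\<in>?T. of_nat (card {c \<in> X. key a b c = t}) * F (rel_idx x a) (rel_idx x b) t)"
      by (rule sum_comp_eq_sum_card_fibres) (use finite_X rel_idx x_in_X that in \<open>auto simp: key_def\<close>)
    finally show ?thesis .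
  qed
  fix a b a' b'
  assume ab: "a \<in> X" "b \<in> X" "a' \<in> X" "b' \<in> X" and cell: "cell a b = cell a' b'"
  then have "rel_idx x a = rel_idx x a'" "rel_idx x b = rel_idx x b'"
    by (simp_all add: cell_def)
  moreover have "card {c \<in> X. key a b c = t} = card {c \<in> X. key a' b' c = t}" if "t \<in> ?T" for t
    using that triangles[OF ab cell] triangles_eq_fibre ab unfolding key_def by auto
  ultimately show "mat_mult X A B a b = mat_mult X A B a' b'"
    unfolding entry[OF ab(1,2)] entry[OF ab(3,4)] by (intro sum.cong) auto
qed

lemma of_nat_card_triangles_eq_if_mult_closed:
  assumes closed: "mult_closed X (cell_constant :: ('a \<Rightarrow> 'a \<Rightarrow> 'f::field) set)"
    and ab: "a \<in> X" "b \<in> X" "a' \<in> X" "b' \<in> X" and cell: "cell a b = cell a' b'"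
    and ljm: "l \<le> d" "j \<le> d" "m \<le> d"
  shows "(of_nat (card (triangles a b l j m)) :: 'f) = of_nat (card (triangles a' b' l j m))"
proof -
  define ind :: "nat \<times> nat \<times> nat \<Rightarrow> 'a \<Rightarrow> 'a \<Rightarrow> 'f" where
    "ind t p q = (if p \<in> X \<and> q \<in> X \<and> cell p q = t then 1 else 0)" for t p q
  have ind: "ind t \<in> cell_constant" for t
    by (rule cell_constantI) (auto simp: ind_def matrices_def)
  define P where "P = mat_mult X (ind (rel_idx x a, j, l)) (ind (l, m, rel_idx x b))"
  have P: "P p q = of_nat (card (triangles p q l j m))"
    if "p \<in> X" "q \<in> X" "rel_idx x p = rel_idx x a" "rel_idx x q = rel_idx x b" for p q
  proof -
    have "P p q = (\<Sum>c\<in>X. if (rel_idx x c, rel_idx p c, rel_idx c q) = (l, j, m) then 1 else 0)"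
      unfolding P_def mat_mult_def ind_def cell_def using that by (intro sum.cong) auto
    also have "\<dots> = of_nat (card {c \<in> X. (rel_idx x c, rel_idx p c, rel_idx c q) = (l, j, m)})"
      using sum.inter_filter[OF finite_X, of "\<lambda>_. 1::'f"] by simp
    finally show ?thesis using triangles_eq_fibre[OF that(1,2) ljm] by simp
  qed
  have "P a b = P a' b'"
    using cell_constantD[OF closed[unfolded mult_closed_def, rule_format, OF ind ind] ab cell]
    unfolding P_def .
  then show ?thesis using P ab cell by (simp add: cell_def)
qed

lemma card_cplx_prod_eq_1I:
  assumes "i \<le> d" "n \<le> d" "k \<le> d" "xR i \<times> xR n \<subseteq> R k"
  shows "card (cplx_prod X d R (conv_idx d R i) n) = 1"
proof -
  have "(\<lambda>(s, t). R (rel_idx s t)) ` (xR i \<times> xR n) = (\<lambda>_. R k) ` (xR i \<times> xR n)"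
    using assms(4) rel_idx_eq[OF assms(3)] by (intro image_cong) auto
  also have "\<dots> = {R k}"
    using xR_nonempty[OF assms(1)] xR_nonempty[OF assms(2)] by (simp add: image_constant_conv)
  finally show ?thesis by (simp add: cplx_prod_conv_idx[OF assms(1,2)])
qed

lemma cell_eq_if_card_cplx_prod_eq_1:
  assumes "i \<le> d" "n \<le> d" "card (cplx_prod X d R (conv_idx d R i) n) = 1"
    and "s \<in> xR i" "s' \<in> xR i" "t \<in> xR n"
  shows "cell s t = cell s' t"
proof -
  obtain S where S: "(\<lambda>(s, t). R (rel_idx s t)) ` (xR i \<times> xR n) = {S}"
    using assms(3) unfolding cplx_prod_conv_idx[OF assms(1,2)] by (rule card_1_singletonE)
  have "R (rel_idx s t) = R (rel_idx s' t)"
    using S[THEN equalityD1] assms(4-6) by blast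
  moreover have "s \<in> X" "s' \<in> X" "t \<in> X" "(x, s) \<in> R i" "(x, s') \<in> R i"
    using assms(4-6) unfolding xR_def by auto
  ultimately have "rel_idx s t = rel_idx s' t"
    using R_inject rel_idx[of s t] rel_idx[of s' t] by simp
  then show ?thesis
    unfolding cell_def using rel_idx_eq[OF assms(1)] \<open>(x, s) \<in> R i\<close> \<open>(x, s') \<in> R i\<close> by simp
qed

lemma triangles_differ_if_forbidden:
  assumes forbidden_configuration
  obtains a b a' b' l j m where "a \<in> X" "b \<in> X" "a' \<in> X" "b' \<in> X" "cell a b = cell a' b'"
    "l \<le> d" "j \<le> d" "m \<le> d" "card (triangles a b l j m) = 1" "card (triangles a' b' l j m) = 0"
proof -
  obtain u v w y z where idx: "u \<le> d" "v \<le> d" "w \<le> d" "y \<le> d" "z \<le> d"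
    and "valency X d R u = 2" "pnum X R u v w = 1" "pnum X R w y z = 1"
    and "card (cplx_prod X d R (conv_idx d R u) z) = 1"
    using assms unfolding forbidden_configuration_def by blast
  obtain b where b: "b \<in> xR z" using xR_nonempty[OF idx(5)] by blast
  have "card {c \<in> xR w. (c, b) \<in> R y} = 1"
    using \<open>pnum X R w y z = 1\<close> pnum_eq_card_xR[OF idx(3-5) b] by simp
  then obtain t where t: "{c \<in> xR w. (c, b) \<in> R y} = {t}"
    by (rule card_1_singletonE)
  then have "t \<in> xR w" by blast
  then have "card {r \<in> xR u. (r, t) \<in> R v} = 1"
    using \<open>pnum X R u v w = 1\<close> pnum_eq_card_xR[OF idx(1-3)] by simp
  then obtain s where s: "{r \<in> xR u. (r, t) \<in> R v} = {s}"
    by (rule card_1_singletonE)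
  have "card (xR u) = 2"
    using \<open>valency X d R u = 2\<close> card_xR[OF idx(1)] by simp
  moreover have "s \<in> xR u" using s by blast
  ultimately obtain s' where s': "s' \<in> xR u" "s' \<noteq> s"
    by (rule card_2_obtain_other)
  have triangles: "triangles r b w v y = (if (r, t) \<in> R v then {t} else {})" for r
    using t unfolding triangles_def by auto
  have "(s, t) \<in> R v" "(s', t) \<notin> R v"
    using s s' by blast+
  moreover have "cell s b = cell s' b"
    by (rule cell_eq_if_card_cplx_prod_eq_1[OF idx(1,5)]) fact+
  moreover have "s \<in> X" "s' \<in> X" "b \<in> X"
    using \<open>s \<in> xR u\<close> s'(1) b xR_subset by blast+
  ultimately show ?thesis
    using that[of s b s' b w v y] idx by (simp add: triangles)
qed

end

locale pointed_quasi_thin_scheme = pointed_scheme + quasi_thin_scheme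
begin

lemma card_xR_le_2: "i \<le> d \<Longrightarrow> card (xR i) \<le> 2"
  using card_xR valency_le_2 by simp

text \<open>Double counting the R_j-edges from xR_i to xR_l.\<close>

lemma perfect_matching_if_unique_succ:
  assumes "i \<le> d" "j \<le> d" "l \<le> d" "card (xR l) = 2"
    and "p \<in> xR i" "card {c \<in> xR l. (p, c) \<in> R j} = 1"
  shows "card (xR i) = 2" and "z \<in> xR l \<Longrightarrow> card {s \<in> xR i. (s, z) \<in> R j} = 1"
proof -
  have succ: "card {c \<in> xR l. (s, c) \<in> R j} = 1" if "s \<in> xR i" for s
  proof -
    have "(x, p) \<in> R i" "(x, s) \<in> R i" using assms(5) that unfolding xR_def by auto
    from card_common_succ_eq[OF assms(3,2,1) this] show ?thesis
      using assms(6) unfolding Collect_xR by simp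
  qed
  have pred: "\<forall>z\<in>xR l. card {s \<in> xR i. (s, z) \<in> R j} = pnum X R i j l"
    using pnum_eq_card_xR[OF assms(1-3)] by simp
  have "(\<Sum>s\<in>xR i. card {c \<in> xR l. (s, c) \<in> R j}) = pnum X R i j l * card (xR l)"
    by (rule sum_multicount[OF finite_xR finite_xR pred])
  then have "card (xR i) = 2 * pnum X R i j l"
    using succ assms(4) by simp
  moreover have "0 < card (xR i)" "card (xR i) \<le> 2"
    using assms(5) finite_xR card_xR_le_2[OF assms(1)] card_gt_0_iff by auto
  ultimately have "pnum X R i j l = 1" "card (xR i) = 2" by presburger+
  then show "card (xR i) = 2" and "z \<in> xR l \<Longrightarrow> card {s \<in> xR i. (s, z) \<in> R j} = 1"
    using pred by simp_all
qed

lemma xR_times_xR_subset_if_two_succs: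
  assumes "i \<le> d" "n \<le> d" "k \<le> d" "s \<in> xR i" "t \<in> xR n" "t' \<in> xR n" "t \<noteq> t'"
    and "(s, t) \<in> R k" "(s, t') \<in> R k"
  shows "xR i \<times> xR n \<subseteq> R k"
proof clarify
  fix s' t'' assume "s' \<in> xR i" "t'' \<in> xR n"
  have "(x, s) \<in> R i" "(x, s') \<in> R i" using assms(4) \<open>s' \<in> xR i\<close> unfolding xR_def by auto
  from card_common_succ_eq[OF assms(2,3,1) this]
  have "card {c \<in> xR n. (s', c) \<in> R k} = card {c \<in> xR n. (s, c) \<in> R k}"
    unfolding Collect_xR by simp
  also have "\<dots> \<ge> card (xR n)"
    using two_le_card[of "{c \<in> xR n. (s, c) \<in> R k}" t t'] assms(5-9) card_xR_le_2[OF assms(2)]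
      finite_xR by simp
  finally have "{c \<in> xR n. (s', c) \<in> R k} = xR n"
    using finite_xR by (intro card_seteq) auto
  then show "(s', t'') \<in> R k" using \<open>t'' \<in> xR n\<close> by blast
qed

lemma xR_times_xR_subset_if_two_preds:
  assumes "i \<le> d" "n \<le> d" "k \<le> d" "t \<in> xR n" "s \<in> xR i" "s' \<in> xR i" "s \<noteq> s'"
    and "(s, t) \<in> R k" "(s', t) \<in> R k"
  shows "xR i \<times> xR n \<subseteq> R k"
proof -
  have "xR n \<times> xR i \<subseteq> R (conv_idx d R k)"
    by (rule xR_times_xR_subset_if_two_succs[OF assms(2,1) conv_idx(1)[OF assms(3)] assms(4-7)])
      (use assms(8,9) conv_idx(2)[OF assms(3)] in simp_all)
  then show ?thesis using conv_idx(2)[OF assms(3)] by blast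
qed

text \<open>
  A defect: (a, b) and (a', b') lie in one cell, and over xR_l the pair (a, b) has the single
  triangle c while (a', b') has none.  It is a forbidden configuration with
  (u, v, w, y, z) = (i, j, l, m, n).
\<close>

context
  fixes i k n l j m :: nat and a b a' b' c c' e' :: 'a
  assumes idx: "i \<le> d" "k \<le> d" "n \<le> d" "l \<le> d" "j \<le> d" "m \<le> d"
    and square: "a \<in> xR i" "a' \<in> xR i" "(a, b) \<in> R k" "(a', b') \<in> R k" "b \<in> xR n" "b' \<in> xR n"
    and card_L: "card (xR l) = 2"
    and good: "{z \<in> xR l. (a, z) \<in> R j} = {c}" "{z \<in> xR l. (z, b) \<in> R m} = {c}"
    and bad: "{z \<in> xR l. (a', z) \<in> R j} = {c'}" "{z \<in> xR l. (z, b') \<in> R m} = {e'}" "c' \<noteq> e'"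
begin

lemma defect_valencies: "valency X d R j = 2" "valency X d R m = 2"
proof -
  have "c \<in> X" "(a, c) \<in> R j" "(c, b) \<in> R m"
    using good unfolding xR_def by blast+
  then have "0 < card {z \<in> X. (a, z) \<in> R j \<and> (z, b) \<in> R m}"
    using finite_X by (auto simp: card_gt_0_iff)
  then have "0 < card {z \<in> X. (a', z) \<in> R j \<and> (z, b') \<in> R m}"
    using card_paths_eq[OF idx(5,6,2) square(3,4)] by simp
  then obtain c'' where c'': "c'' \<in> X" "(a', c'') \<in> R j" "(c'', b') \<in> R m"
    unfolding card_gt_0_iff by blast
  have "c'' \<notin> xR l"
  proof
    assume "c'' \<in> xR l"
    then have "c'' = c'" "c'' = e'"
      using bad(1,2) c'' by blast+
    with bad(3) show False by simp
  qed
  moreover have "c' \<in> xR l" "(a', c') \<in> R j" "e' \<in> xR l" "(e', b') \<in> R m"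
    using bad by blast+
  ultimately have "c'' \<noteq> c'" "c'' \<noteq> e'"
    by auto
  then show "valency X d R j = 2" "valency X d R m = 2"
    using valency_eq_2_if_two_succs[OF idx(5) c''(2) \<open>(a', c') \<in> R j\<close>]
      valency_eq_2_if_two_preds[OF idx(6) c''(3) \<open>(e', b') \<in> R m\<close>] by simp_all
qed

lemma defect_matching_i: "card (xR i) = 2" "z \<in> xR l \<Longrightarrow> card {s \<in> xR i. (s, z) \<in> R j} = 1"
  using perfect_matching_if_unique_succ[OF idx(1,5,4) card_L square(1)] good(1) by simp_all

lemma defect_matching_n: "card (xR n) = 2" "z \<in> xR l \<Longrightarrow> card {t \<in> xR n. (z, t) \<in> R m} = 1"
proof -
  let ?m' = "conv_idx d R m"
  have conv: "\<And>p q. (p, q) \<in> R ?m' \<longleftrightarrow> (q, p) \<in> R m"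
    using conv_idx(2)[OF idx(6)] .
  have "card {z \<in> xR l. (b, z) \<in> R ?m'} = 1"
    using good(2) by (simp add: conv)
  from perfect_matching_if_unique_succ[OF idx(3) conv_idx(1)[OF idx(6)] idx(4) card_L square(5)
      this]
  show "card (xR n) = 2" "z \<in> xR l \<Longrightarrow> card {t \<in> xR n. (z, t) \<in> R m} = 1"
    by (simp_all add: conv)
qed

lemma defect_xR_times_xR_subset: "xR i \<times> xR n \<subseteq> R k"
proof -
  have "c \<in> xR l" "(a, c) \<in> R j" "(c, b) \<in> R m"
    and "c' \<in> xR l" "(a', c') \<in> R j" "e' \<in> xR l" "(e', b') \<in> R m"
    using good bad by blast+
  have unique_pred: "s = s'"
    if "s \<in> xR i" "s' \<in> xR i" "(s, z) \<in> R j" "(s', z) \<in> R j" "z \<in> xR l" for s s' z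
    using defect_matching_i(2)[OF that(5)] that(1-4) finite_xR
      card_le_Suc0_iff_eq[of "{s \<in> xR i. (s, z) \<in> R j}"] by auto
  have unique_succ: "t = t'"
    if "t \<in> xR n" "t' \<in> xR n" "(z, t) \<in> R m" "(z, t') \<in> R m" "z \<in> xR l" for t t' z
    using defect_matching_n(2)[OF that(5)] that(1-4) finite_xR
      card_le_Suc0_iff_eq[of "{t \<in> xR n. (z, t) \<in> R m}"] by auto
  consider "a' = a" | "b' = b" | "a' \<noteq> a" "b' \<noteq> b" by blast
  then show ?thesis
  proof cases
    case 1
    then have "c' = c" using good(1) bad(1) by simp
    have "b \<noteq> b'"
    proof
      assume "b = b'"
      then have "e' = c" using good(2) bad(2) by simp
      with \<open>c' = c\<close> bad(3) show False by simp
    qed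
    with 1 show ?thesis
      using xR_times_xR_subset_if_two_succs[OF idx(1,3,2) square(1,5,6)] square(3,4) by simp
  next
    case 2
    then have "e' = c" using good(2) bad(2) by simp
    have "a \<noteq> a'"
    proof
      assume "a = a'"
      then have "c' = c" using good(1) bad(1) by simp
      with \<open>e' = c\<close> bad(3) show False by simp
    qed
    with 2 show ?thesis
      using xR_times_xR_subset_if_two_preds[OF idx(1,3,2) square(5,1,2)] square(3,4) by simp
  next
    case 3
    have "c' \<noteq> c"
    proof
      assume "c' = c"
      then have "a = a'"
        using unique_pred[OF square(1,2) \<open>(a, c) \<in> R j\<close> _ \<open>c \<in> xR l\<close>] \<open>(a', c') \<in> R j\<close> by simp
      with 3(1) show False by simp
    qed
    moreover have "e' \<noteq> c"
    proof
      assume "e' = c"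
      then have "b = b'"
        using unique_succ[OF square(5,6) \<open>(c, b) \<in> R m\<close> _ \<open>c \<in> xR l\<close>] \<open>(e', b') \<in> R m\<close> by simp
      with 3(2) show False by simp
    qed
    moreover obtain p q where "xR l = {p, q}"
      using card_L unfolding card_2_iff by blast
    ultimately have "c' = e'"
      using \<open>c \<in> xR l\<close> \<open>c' \<in> xR l\<close> \<open>e' \<in> xR l\<close> by auto
    with bad(3) show ?thesis by contradiction
  qed
qed

lemma forbidden_configuration_if_defect: forbidden_configuration
proof -
  have "c \<in> xR l" using good(1) by blast
  have "valency X d R i = 2" "valency X d R l = 2" "valency X d R n = 2"
    using defect_matching_i(1) card_L defect_matching_n(1) card_xR idx by simp_all
  moreover have "pnum X R i j l = 1"
    using pnum_eq_card_xR[OF idx(1,5,4) \<open>c \<in> xR l\<close>] defect_matching_i(2)[OF \<open>c \<in> xR l\<close>] by simp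
  moreover have "pnum X R l m n = 1"
    using pnum_eq_card_xR[OF idx(4,6,3) square(5)] good(2) by simp
  moreover have "card (cplx_prod X d R (conv_idx d R i) n) = 1"
    by (rule card_cplx_prod_eq_1I[OF idx(1,3,2) defect_xR_times_xR_subset])
  ultimately show ?thesis
    unfolding forbidden_configuration_def using idx defect_valencies by blast
qed

end

lemma forbidden_if_fewer_triangles:
  assumes ab: "a \<in> X" "b \<in> X" "a' \<in> X" "b' \<in> X" and cell: "cell a b = cell a' b'"
    and ljm: "l \<le> d" "j \<le> d" "m \<le> d"
    and fewer: "card (triangles a b l j m) < card (triangles a' b' l j m)"
  shows forbidden_configuration
proof -
  obtain i k n where ikn: "cell a b = (i, k, n)"
    by (cases "cell a b")
  note square = cell_memberships[OF ab(1,2) ikn] cell_memberships[OF ab(3,4) ikn[unfolded cell]]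
  have sub: "{z \<in> xR l. P z} \<subseteq> xR l" for P by blast
  have "card {z \<in> xR l. (a, z) \<in> R j} = card {z \<in> xR l. (a', z) \<in> R j}"
    using card_common_succ_eq[OF ljm(1,2) square(1)] square(4,10)
    unfolding Collect_xR xR_def by simp
  moreover have "card {z \<in> xR l. (z, b) \<in> R m} = card {z \<in> xR l. (z, b') \<in> R m}"
    using card_paths_eq[OF ljm(1,3) square(3)] square(6,12) unfolding Collect_xR xR_def by simp
  moreover have "card ({z \<in> xR l. (a, z) \<in> R j} \<inter> {z \<in> xR l. (z, b) \<in> R m})
      < card ({z \<in> xR l. (a', z) \<in> R j} \<inter> {z \<in> xR l. (z, b') \<in> R m})"
    using fewer unfolding triangles_def Collect_conj_eq[symmetric] by (simp add: conj_ac)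
  ultimately obtain c e c' where "card (xR l) = 2"
    "{z \<in> xR l. (a, z) \<in> R j} = {c}" "{z \<in> xR l. (z, b) \<in> R m} = {e}" "c \<noteq> e"
    "{z \<in> xR l. (a', z) \<in> R j} = {c'}" "{z \<in> xR l. (z, b') \<in> R m} = {c'}"
    by (rule card_Int_less_imp_singletons[OF finite_xR card_xR_le_2[OF ljm(1)] sub sub sub sub])
  from forbidden_configuration_if_defect[OF square(1-3) ljm square(10,4,11,5,12,6)
      this(1,5,6,2,3,4)]
  show ?thesis .
qed

lemma card_triangles_eq_if_not_forbidden:
  assumes "\<not> forbidden_configuration"
    and "a \<in> X" "b \<in> X" "a' \<in> X" "b' \<in> X" "cell a b = cell a' b'" "l \<le> d" "j \<le> d" "m \<le> d"
  shows "card (triangles a b l j m) = card (triangles a' b' l j m)"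
proof -
  have "\<not> card (triangles a b l j m) < card (triangles a' b' l j m)"
    using forbidden_if_fewer_triangles[OF assms(2-9)] assms(1) by blast
  moreover have "\<not> card (triangles a' b' l j m) < card (triangles a b l j m)"
    using forbidden_if_fewer_triangles[OF assms(4,5,2,3) assms(6)[symmetric] assms(7-9)] assms(1)
    by blast
  ultimately show ?thesis by simp
qed

lemma mult_closed_iff_not_forbidden:
  "mult_closed X (cell_constant :: ('a \<Rightarrow> 'a \<Rightarrow> 'f::field) set) \<longleftrightarrow> \<not> forbidden_configuration"
proof
  assume closed: "mult_closed X (cell_constant :: ('a \<Rightarrow> 'a \<Rightarrow> 'f) set)"
  show "\<not> forbidden_configuration"
  proof
    assume forbidden_configuration
    then obtain a b a' b' l j m where "a \<in> X" "b \<in> X" "a' \<in> X" "b' \<in> X" "cell a b = cell a' b'"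
      "l \<le> d" "j \<le> d" "m \<le> d" "card (triangles a b l j m) = 1" "card (triangles a' b' l j m) = 0"
      by (rule triangles_differ_if_forbidden)
    with of_nat_card_triangles_eq_if_mult_closed[OF closed] show False
      by (metis of_nat_0 of_nat_1 zero_neq_one)
  qed
next
  assume "\<not> forbidden_configuration"
  then show "mult_closed X (cell_constant :: ('a \<Rightarrow> 'a \<Rightarrow> 'f) set)"
    unfolding mult_closed_def
    using mat_mult_cell_constant card_triangles_eq_if_not_forbidden by blast
qed

end

theorem lemma4p9:
  fixes X :: "'a set" and d :: nat and R :: "nat \<Rightarrow> ('a \<times> 'a) set" and x :: 'a
  assumes "is_scheme X d R" and "quasi_thin X d R" and "x \<in> X"
  shows "unital_subalgebra X (T0 X d R x :: ('a \<Rightarrow> 'a \<Rightarrow> 'f::field) set) \<longleftrightarrow>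
    \<not> (\<exists>u\<le>d. \<exists>v\<le>d. \<exists>w\<le>d. \<exists>y\<le>d. \<exists>z\<le>d.
          valency X d R u = 2 \<and> valency X d R v = 2 \<and> valency X d R w = 2 \<and>
          valency X d R y = 2 \<and> valency X d R z = 2 \<and>
          pnum X R u v w = 1 \<and> pnum X R w y z = 1 \<and>
          card (cplx_prod X d R (conv_idx d R u) z) = 1)"
proof -
  interpret pointed_quasi_thin_scheme X d R x
    by unfold_locales (fact assms)+
  have "unital_subalgebra X (T0 X d R x :: ('a \<Rightarrow> 'a \<Rightarrow> 'f) set) \<longleftrightarrow> \<not> forbidden_configuration"
    unfolding T0_eq_cell_constant unital_subalgebra_cell_constant_iff
    by (rule mult_closed_iff_not_forbidden)
  then show ?thesis
    unfolding forbidden_configuration_def .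
qed

end
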